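(* Let $c$ be a positive integer and let $\nu$ be the smallest positive integer that does not divide $c$. There is a constant $C$ depending only on $c$ such that for every integer $n>c$: (1) $\left|\mathrm{mup}(n,c)-\frac{n}{\nu}\right|\le C$; and (2) in every unique partition of $n$ and $c$ with exactly $\mathrm{mup}(n,c)$ parts, all but at most $C$ of the parts are equal to $\nu$.
   Context: A unique partition of positive integers $A$ and $B$ consists of positive integers $A_1,\dots,A_a$ with $\sum_i A_i=A$ and $B_1,\dots,B_b$ with $\sum_j B_j=B$ such that, viewing these as $a+b$ indexed items, the only subsets of the items whose sum equals $A$ are the set of items $\{A_1,\dots,A_a\}$ and, in case $A=B$, also its complement. Its parts are the $a+b$ numbers $A_i,B_j$. $\mathrm{mup}(A,B)$ is the maximum of $a+b$ over all unique partitions of $A$ and $B$ (with $\mathrm{mup}(1,1)=2$). *)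

theory Defs
  imports Complex_Main
begin

definition unique_partition :: "nat \<Rightarrow> nat \<Rightarrow> nat list \<Rightarrow> nat list \<Rightarrow> bool" where
  "unique_partition A B xs ys \<longleftrightarrow>
     (\<forall>x\<in>set xs. 0 < x) \<and> (\<forall>y\<in>set ys. 0 < y) \<and>
     sum_list xs = A \<and> sum_list ys = B \<and>
     (\<forall>S. S \<subseteq> {0..<length (xs @ ys)} \<longrightarrow>
        ((\<Sum>i\<in>S. (xs @ ys) ! i) = A \<longleftrightarrow>
          (S = {0..<length xs} \<or> (A = B \<and> S = {length xs..<length (xs @ ys)}))))"

definition mup :: "nat \<Rightarrow> nat \<Rightarrow> nat" where
  "mup A B = Max {length xs + length ys | xs ys. unique_partition A B xs ys}"

end

(*
  Every k < \<nu> divides c. Among the parts of n there are fewer than c/k parts equal to k: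
  otherwise c/k of them would sum to c, and their complement would be a second index set
  summing to n. So at most (\<nu> - 1) c parts of n are smaller than \<nu>, and since every other
  part is at least \<nu>, with one unit of slack for each part larger than \<nu>, we get
  \<nu> mup(n,c) \<le> n + \<nu>^2 c. Conversely \<nu>, ..., \<nu>, n - m \<nu> together with c is a unique
  partition because \<nu> does not divide c, which gives n \<le> \<nu> mup(n,c) + c. For a maximal
  partition the slack is therefore O(c), and so is the number of parts different from \<nu>.
*)
theory Submission
  imports Defs
begin

lemma length_le_sum_list: "\<forall>x\<in>set xs. 0 < x \<Longrightarrow> length xs \<le> sum_list (xs :: nat list)"
  by (induction xs) auto

lemma count_list_filter_le: "count_list (filter P xs) x \<le> count_list xs x"
  by (induction xs) auto

lemma threshold_length_le_sum_list:
  "v * length xs + length (filter (\<lambda>x. v < x) xs)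
     \<le> sum_list xs + v * length (filter (\<lambda>x. x < v) (xs :: nat list))"
  by (induction xs) auto

lemma length_filter_neq:
  "length (filter (\<lambda>x. x \<noteq> v) xs)
     = length (filter (\<lambda>x. x < v) xs) + length (filter (\<lambda>x. v < x) (xs :: nat list))"
  by (induction xs) auto

lemma least_nondivisor:
  fixes c :: nat
  assumes "0 < c"
  defines "v \<equiv> LEAST k. 0 < k \<and> \<not> k dvd c"
  shows "0 < v" and "\<not> v dvd c" and "\<And>k. 0 < k \<Longrightarrow> k < v \<Longrightarrow> k dvd c"
proof -
  have "0 < Suc c \<and> \<not> Suc c dvd c"
    using assms by (auto dest: dvd_imp_le)
  then show "0 < v" and "\<not> v dvd c"
    unfolding v_def by (metis (mono_tags, lifting) LeastI)+
  show "k dvd c" if "0 < k" and "k < v" for k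
    using not_less_Least[of k] that unfolding v_def by blast
qed

lemma abs_diff_divide_le:
  fixes v t n a b :: nat
  assumes "0 < v" and lower: "n \<le> v * t + a" and upper: "v * t \<le> n + v * b"
  shows "\<bar>real t - real n / real v\<bar> \<le> real (a + b)"
proof -
  define x where "x = real t - real n / real v"
  have vx: "real v * x = real v * real t - real n"
    using \<open>0 < v\<close> by (simp add: x_def field_simps)
  have "real n \<le> real v * real t + real a" and "real v * real t \<le> real n + real v * real b"
    using of_nat_mono[OF lower] of_nat_mono[OF upper] by simp_all
  moreover have "real a \<le> real v * real a"
    using mult_right_mono[of 1 "real v" "real a"] \<open>0 < v\<close> by simp
  ultimately have "real v * x \<le> real v * real b" and "real v * (- x) \<le> real v * real a"
    using vx by simp_all
  then have "x \<le> real b" and "- x \<le> real a"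
    using \<open>0 < v\<close> by (simp_all only: mult_le_cancel_left_pos of_nat_0_less_iff)
  then show ?thesis
    unfolding x_def[symmetric] by (simp add: abs_le_iff)
qed

lemma unique_partition_length_le:
  assumes "unique_partition A B xs ys"
  shows "length xs \<le> A" and "length ys \<le> B"
  using assms length_le_sum_list unfolding unique_partition_def by blast+

lemma unique_partition_complement_eq:
  assumes up: "unique_partition A B xs ys" and "A \<noteq> B"
    and S: "S \<subseteq> {0..<length (xs @ ys)}" and sum_S: "(\<Sum>i\<in>S. (xs @ ys) ! i) = B"
  shows "S = {length xs..<length (xs @ ys)}"
proof -
  let ?I = "{0..<length (xs @ ys)}"
  have "(\<Sum>i\<in>?I. (xs @ ys) ! i) = sum_list (xs @ ys)"
    by (simp only: sum_list_sum_nth)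
  also have "\<dots> = A + B"
    using up by (simp add: unique_partition_def)
  finally have "(\<Sum>i\<in>?I. (xs @ ys) ! i) = A + B" .
  then have "(\<Sum>i\<in>?I - S. (xs @ ys) ! i) = A"
    using sum_diff_nat[OF finite_subset[OF S] S] sum_S by simp
  then have "?I - S = {0..<length xs}"
    using up \<open>A \<noteq> B\<close> unfolding unique_partition_def by blast
  with S have "S = ?I - {0..<length xs}"
    by (metis Diff_Diff_Int inf.absorb_iff2)
  then show ?thesis
    by auto
qed

lemma unique_partition_count_list_less:
  assumes up: "unique_partition A B xs ys" and "A \<noteq> B" and "0 < B" and "0 < k" and "k dvd B"
  shows "count_list xs k < B div k"
proof (rule ccontr)
  let ?K = "{i. i < length xs \<and> xs ! i = k}"
  assume "\<not> count_list xs k < B div k"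
  then have "B div k \<le> card ?K"
    by (simp add: count_list_eq_length_filter length_filter_conv_card eq_commute)
  then obtain S where S: "S \<subseteq> ?K" "card S = B div k"
    by (meson obtain_subset_with_card_n)
  have S_idx: "S \<subseteq> {0..<length (xs @ ys)}"
    using S(1) by auto
  have "(\<Sum>i\<in>S. (xs @ ys) ! i) = (\<Sum>i\<in>S. k)"
    using S(1) by (intro sum.cong) (auto simp: nth_append)
  also have "\<dots> = B"
    using S(2) \<open>k dvd B\<close> by simp
  finally have "S = {length xs..<length (xs @ ys)}"
    by (rule unique_partition_complement_eq[OF up \<open>A \<noteq> B\<close> S_idx])
  moreover have "S \<noteq> {}"
    using S(2) \<open>0 < B\<close> \<open>0 < k\<close> \<open>k dvd B\<close> by (auto simp: dvd_div_eq_0_iff)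
  ultimately show False
    using S(1) by auto
qed

lemma unique_partition_length_filter_less:
  assumes up: "unique_partition A B xs ys" and "A \<noteq> B" and "0 < B"
    and dvd: "\<And>k. 0 < k \<Longrightarrow> k < v \<Longrightarrow> k dvd B"
  shows "length (filter (\<lambda>x. x < v) xs) \<le> (v - 1) * B"
proof -
  have "set (filter (\<lambda>x. x < v) xs) \<subseteq> {1..<v}"
    using up by (auto simp: unique_partition_def Suc_le_eq)
  then have "length (filter (\<lambda>x. x < v) xs) = (\<Sum>k\<in>{1..<v}. count_list (filter (\<lambda>x. x < v) xs) k)"
    by (simp add: sum_count_set)
  also have "\<dots> \<le> (\<Sum>k\<in>{1..<v}. B)"
  proof (rule sum_mono)
    fix k assume "k \<in> {1..<v}"
    then have "count_list xs k < B div k"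
      using unique_partition_count_list_less[OF up \<open>A \<noteq> B\<close> \<open>0 < B\<close>] dvd by auto
    then show "count_list (filter (\<lambda>x. x < v) xs) k \<le> B"
      using count_list_filter_le[of "\<lambda>x. x < v" xs k] div_le_dividend[of B k] by linarith
  qed
  finally show ?thesis
    by simp
qed

lemma unique_partition_length_upper:
  assumes up: "unique_partition A B xs ys" and "A \<noteq> B" and "0 < B"
    and dvd: "\<And>k. 0 < k \<Longrightarrow> k < v \<Longrightarrow> k dvd B"
  shows "v * (length xs + length ys) + length (filter (\<lambda>x. v < x) xs) \<le> A + v * (v * B)"
proof -
  have "v * length xs + length (filter (\<lambda>x. v < x) xs) \<le> A + v * ((v - 1) * B)"
    using threshold_length_le_sum_list[of v xs] up
      unique_partition_length_filter_less[where v = v, OF up \<open>A \<noteq> B\<close> \<open>0 < B\<close> dvd]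
    by (simp add: unique_partition_def) (meson add_left_mono mult_le_mono2 order_trans)
  moreover have "v * length ys \<le> v * B"
    using unique_partition_length_le(2)[OF up] by simp
  moreover have "v * ((v - 1) * B) + v * B = v * (v * B)"
    by (cases v) (simp_all add: algebra_simps)
  ultimately show ?thesis
    unfolding distrib_left by linarith
qed

lemma unique_partition_card_neq_le:
  assumes up: "unique_partition A B xs ys" and "A \<noteq> B" and "0 < B" and "0 < v"
    and dvd: "\<And>k. 0 < k \<Longrightarrow> k < v \<Longrightarrow> k dvd B"
    and long: "A \<le> v * (length xs + length ys) + B"
  shows "card {i. i < length (xs @ ys) \<and> (xs @ ys) ! i \<noteq> v} \<le> (v + 1)\<^sup>2 * B"
proof -
  have "card {i. i < length (xs @ ys) \<and> (xs @ ys) ! i \<noteq> v}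
      \<le> length (filter (\<lambda>x. x < v) xs) + length (filter (\<lambda>x. v < x) xs) + length ys"
    using length_filter_conv_card[of "\<lambda>x. x \<noteq> v" "xs @ ys"] length_filter_le[of "\<lambda>x. x \<noteq> v" ys]
    by (simp add: length_filter_neq)
  also have "\<dots> \<le> (v - 1) * B + (v * (v * B) + B) + B"
    using unique_partition_length_filter_less[where v = v, OF up \<open>A \<noteq> B\<close> \<open>0 < B\<close> dvd]
      unique_partition_length_upper[where v = v, OF up \<open>A \<noteq> B\<close> \<open>0 < B\<close> dvd] long
      unique_partition_length_le(2)[OF up]
    by linarith
  also have "\<dots> \<le> (v + 1)\<^sup>2 * B"
    using \<open>0 < v\<close> by (cases v) (simp_all add: power2_eq_square algebra_simps)
  finally show ?thesis .
qed

lemma sum_nth_replicate_append_pair: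
  assumes "S \<subseteq> {0..<m + 2}"
  shows "(\<Sum>i\<in>S. (replicate m v @ [r, c]) ! i)
    = card (S \<inter> {0..<m}) * v + (if m \<in> S then r else 0) + (if Suc m \<in> S then c else 0)"
proof -
  let ?L = "replicate m v @ [r, c]"
  have "finite S"
    using assms finite_subset by blast
  then have "(\<Sum>i\<in>S. ?L ! i) = (\<Sum>i\<in>S \<inter> {0..<m}. ?L ! i) + (\<Sum>i\<in>S - {0..<m}. ?L ! i)"
    by (metis Diff_Int2 inf.idem sum.Int_Diff)
  moreover have "(\<Sum>i\<in>S \<inter> {0..<m}. ?L ! i) = card (S \<inter> {0..<m}) * v"
    by (simp add: nth_append)
  moreover have "S - {0..<m} = (if m \<in> S then {m} else {}) \<union> (if Suc m \<in> S then {Suc m} else {})"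
    using assms by (auto simp: less_Suc_eq)
  ultimately show ?thesis
    by (simp add: nth_append)
qed

lemma unique_partition_replicate:
  assumes "0 < c" and "0 < v" and "\<not> v dvd c" and small: "m * v + c < n"
  shows "unique_partition n c (replicate m v @ [n - m * v]) [c]"
proof -
  define r where "r = n - m * v"
  have r: "m * v + r = n" "c < r"
    using small by (simp_all add: r_def)
  have sum_eq_iff: "(\<Sum>i\<in>S. (replicate m v @ [r, c]) ! i) = n \<longleftrightarrow> S = {0..<Suc m}"
    if S: "S \<subseteq> {0..<m + 2}" for S
  proof
    assume "S = {0..<Suc m}"
    then show "(\<Sum>i\<in>S. (replicate m v @ [r, c]) ! i) = n"
      using sum_nth_replicate_append_pair[OF S] r by (simp add: Int_absorb2)
  next
    define a where "a = card (S \<inter> {0..<m})"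
    have "a \<le> m"
      unfolding a_def by (metis card_atLeastLessThan card_mono diff_zero finite_atLeastLessThan inf_le2)
    then have av: "a * v \<le> m * v"
      by simp
    assume "(\<Sum>i\<in>S. (replicate m v @ [r, c]) ! i) = n"
    then have sum_S: "a * v + (if m \<in> S then r else 0) + (if Suc m \<in> S then c else 0) = n"
      using sum_nth_replicate_append_pair[OF S] by (simp add: a_def)
    have "m \<in> S"
    proof (rule ccontr)
      assume "m \<notin> S"
      then have "n \<le> a * v + c"
        using sum_S by (auto split: if_splits)
      with av small show False
        by linarith
    qed
    moreover have "Suc m \<notin> S"
    proof
      assume "Suc m \<in> S"
      with \<open>m \<in> S\<close> sum_S r have "c = (m - a) * v"
        by (simp add: diff_mult_distrib)
      with \<open>\<not> v dvd c\<close> show False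
        by simp
    qed
    ultimately have "a * v + r = m * v + r"
      using sum_S r by simp
    then have "a = m"
      using \<open>0 < v\<close> by simp
    then have "S \<inter> {0..<m} = {0..<m}"
      unfolding a_def by (metis card_atLeastLessThan card_subset_eq diff_zero finite_atLeastLessThan inf_le2)
    with S \<open>m \<in> S\<close> \<open>Suc m \<notin> S\<close> show "S = {0..<Suc m}"
      by (auto simp: less_Suc_eq)
  qed
  have "sum_list (replicate m v @ [r]) = n"
    using r by (simp add: sum_list_replicate)
  moreover have "\<forall>x\<in>set (replicate m v @ [r]). 0 < x"
    using \<open>0 < v\<close> r by auto
  ultimately show ?thesis
    using sum_eq_iff \<open>0 < c\<close> small unfolding unique_partition_def r_def[symmetric]
    by (simp add: numeral_2_eq_2)
qed

lemma exists_long_unique_partition: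
  assumes "0 < c" and "c < n" and "0 < v" and "\<not> v dvd c"
  shows "\<exists>xs ys. unique_partition n c xs ys \<and> n \<le> v * (length xs + length ys) + c"
proof -
  define m where "m = (n - c - 1) div v"
  have "m * v \<le> n - c - 1" and "n - c - 1 < v + m * v"
    unfolding m_def using dividend_less_div_times[OF \<open>0 < v\<close>] by simp_all
  then have "m * v + c < n" and "n \<le> v * (m + 2) + c"
    using \<open>c < n\<close> by (simp_all add: algebra_simps)
  then show ?thesis
    using unique_partition_replicate[OF \<open>0 < c\<close> \<open>0 < v\<close> \<open>\<not> v dvd c\<close>] by fastforce
qed

lemma finite_unique_partition_lengths:
  "finite {length xs + length ys | xs ys. unique_partition A B xs ys}"
  by (rule finite_subset[of _ "{..A + B}"]) (auto dest: unique_partition_length_le intro: add_mono)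

lemma length_le_mup:
  assumes "unique_partition A B xs ys"
  shows "length xs + length ys \<le> mup A B"
  unfolding mup_def using assms by (intro Max_ge[OF finite_unique_partition_lengths]) blast

lemma mup_attained:
  assumes "unique_partition A B xs ys"
  obtains xs' ys' where "unique_partition A B xs' ys'" and "length xs' + length ys' = mup A B"
proof -
  have "mup A B \<in> {length xs + length ys | xs ys. unique_partition A B xs ys}"
    unfolding mup_def using assms by (intro Max_in[OF finite_unique_partition_lengths]) blast
  with that show ?thesis
    by auto
qed

lemma mup_lower_bound:
  assumes "0 < c" and "c < n" and "0 < v" and "\<not> v dvd c"
  shows "n \<le> v * mup n c + c"
proof -
  obtain xs ys where "unique_partition n c xs ys" and "n \<le> v * (length xs + length ys) + c"
    using exists_long_unique_partition[OF assms] by blast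
  then show ?thesis
    using length_le_mup by (meson add_le_mono1 le_trans mult_le_mono2)
qed

lemma mup_upper_bound:
  assumes "unique_partition A B xs ys" and "A \<noteq> B" and "0 < B"
    and "\<And>k. 0 < k \<Longrightarrow> k < v \<Longrightarrow> k dvd B"
  shows "v * mup A B \<le> A + v * (v * B)"
proof -
  obtain xs' ys' where up': "unique_partition A B xs' ys'" and "length xs' + length ys' = mup A B"
    using mup_attained[OF assms(1)] by blast
  moreover have "v * (length xs' + length ys') \<le> A + v * (v * B)"
    using unique_partition_length_upper[where v = v, OF up' assms(2-)] by linarith
  ultimately show ?thesis
    by simp
qed

theorem proposition3p2:
  fixes c :: nat
  assumes "0 < c"
  defines "\<nu> \<equiv> (LEAST k::nat. 0 < k \<and> \<not> k dvd c)"
  shows "\<exists>C::real. \<forall>n::nat. n > c \<longrightarrow>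
           \<bar>real (mup n c) - real n / real \<nu>\<bar> \<le> C \<and>
           (\<forall>xs ys. unique_partition n c xs ys \<and> length xs + length ys = mup n c \<longrightarrow>
              real (card {i. i < length (xs @ ys) \<and> (xs @ ys) ! i \<noteq> \<nu>}) \<le> C)"
proof (intro exI[of _ "real ((\<nu> + 1)\<^sup>2 * c)"] allI impI conjI)
  note \<nu> = least_nondivisor[OF \<open>0 < c\<close>, folded \<nu>_def]
  fix n :: nat
  assume "c < n"
  then have "n \<noteq> c"
    by simp
  have lower: "n \<le> \<nu> * mup n c + c"
    using mup_lower_bound[OF \<open>0 < c\<close> \<open>c < n\<close> \<nu>(1,2)] .
  obtain xs0 ys0 where "unique_partition n c xs0 ys0"
    using exists_long_unique_partition[OF \<open>0 < c\<close> \<open>c < n\<close> \<nu>(1,2)] by blast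
  from mup_upper_bound[OF this \<open>n \<noteq> c\<close> \<open>0 < c\<close> \<nu>(3)]
  have "\<bar>real (mup n c) - real n / real \<nu>\<bar> \<le> real (c + \<nu> * c)"
    by (rule abs_diff_divide_le[OF \<nu>(1) lower])
  also have "\<dots> \<le> real ((\<nu> + 1)\<^sup>2 * c)"
    by (simp only: of_nat_le_iff) (simp add: power2_eq_square)
  finally show "\<bar>real (mup n c) - real n / real \<nu>\<bar> \<le> real ((\<nu> + 1)\<^sup>2 * c)" .
  fix xs ys
  assume max: "unique_partition n c xs ys \<and> length xs + length ys = mup n c"
  with lower have "n \<le> \<nu> * (length xs + length ys) + c"
    by simp
  from unique_partition_card_neq_le[where v = \<nu>, OF conjunct1[OF max] \<open>n \<noteq> c\<close> \<open>0 < c\<close> \<nu>(1,3) this]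
  show "real (card {i. i < length (xs @ ys) \<and> (xs @ ys) ! i \<noteq> \<nu>}) \<le> real ((\<nu> + 1)\<^sup>2 * c)"
    by (simp only: of_nat_le_iff)
qed

end
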